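(* Let $d\ge2$, $n\ge1$, let $\gamma$ be a positive conductivity on the lattice graph below, and let $t$ be an integer with $d-1\le t\le dn-1$. Then $T^{(t)}=T_2^{(t)}\circ T_1^{(t)}$, where $T^{(t)},T_1^{(t)},T_2^{(t)}$ are the operators defined in the context.
   Context: Lattice: $D=\{x\in\mathbb Z^d:1\le x_i\le n\ \forall i\}$, $\partial D=\{p\in\mathbb Z^d:\min_{q\in D}\|q-p\|_{\ell^1}=1\}$; $E$ = unordered pairs $pq\subseteq D\cup\partial D$ with $\|p-q\|_{\ell^1}=1$, not both in $\partial D$; $\mathcal N(p)=\{q:pq\in E\}$; each $b\in\partial D$ has a unique neighbour $q_b\in D$. Conductivity $\gamma:E\to(0,\infty)$, symmetric. $(\Delta_\gamma\mathbf u)_p=\sum_{q\in\mathcal N(p)}\gamma_{pq}(\mathbf u_q-\mathbf u_p)$. $S_\gamma\varphi$ is the unique $\mathbf u\in\mathbb R^{D\cup\partial D}$ with $\Delta_\gamma \mathbf u=0$ on $D$, $\mathbf u=\varphi$ on $\partial D$; $(D_\gamma\mathbf u)_b=\gamma_{bq_b}(\mathbf u_{q_b}-\mathbf u_b)$ for $b\in\partial D$; $\Lambda_\gamma=D_\gamma\circ S_\gamma$. Functions on a subset are extended by zero. For $x\in\mathbb Z^d$ let $s(x)=\sum_i x_i$. Define $L_t=\{x\in D:s(x)=t\}$, $L_t^{\mathcal S}=\{x\in D:s(x)\le t\}$, $K_t=\{x\in\partial D:s(x)=t\}$, $K_t^+=\{x\in K_t:\max_i x_i=n+1\}$, $K_t^-=\{x\in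 K_t:\min_i x_i=0\}$, $K_t^{\mathcal S\pm}=\bigcup_{\ell\le t}K_\ell^\pm$, $J_t^{\mathcal S}=K_t^{\mathcal S-}\cup K_{t+1}^{\mathcal S+}$. Operators: $T^{(t)}:\mathbb R^{J_t^{\mathcal S}}\to\mathbb R^{\partial D\setminus J_t^{\mathcal S}}$, $\varphi\mapsto(\Lambda_\gamma\varphi)|_{\partial D\setminus J_t^{\mathcal S}}$; $T_1^{(t)}:\mathbb R^{J_t^{\mathcal S}}\to\mathbb R^{L_{t+1}}$, $\varphi\mapsto(S_\gamma\varphi)|_{L_{t+1}}$. $T_2^{(t)}:\mathbb R^{L_{t+1}}\to\mathbb R^{\partial D\setminus J_t^{\mathcal S}}$ is the Dirichlet-to-Neumann map of the upper part: for $\mathbf y\in\mathbb R^{L_{t+1}}$ let $\mathbf w$ be the unique function on $(D\setminus L_t^{\mathcal S})\cup(\partial D\setminus J_t^{\mathcal S})$ with $\mathbf w=\mathbf y$ on $L_{t+1}$, $\mathbf w=0$ on $\partial D\setminus J_t^{\mathcal S}$ and $(\Delta_\gamma\mathbf w)_p=0$ for all $p\in D\setminus L_{t+1}^{\mathcal S}$; then $(T_2^{(t)}\mathbf y)_b=\gamma_{bq_b}(\mathbf w_{q_b}-\mathbf w_b)$ for $b\in\partial D\setminus J_t^{\mathcal S}$. *)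

theory Defs
  imports Complex_Main
begin

text \<open>Lattice points of Z^d are represented as integer lists of length d.
  Real-valued functions on a finite subset of Z^d are represented as functions
  int list => real that are extended by zero outside the subset.\<close>

definition l1dist :: "int list \<Rightarrow> int list \<Rightarrow> int" where
  "l1dist x y = (\<Sum>i<length x. \<bar>x ! i - y ! i\<bar>)"

definition ssum :: "int list \<Rightarrow> int" where
  "ssum x = sum_list x"

definition dom_D :: "nat \<Rightarrow> nat \<Rightarrow> int list set" where
  "dom_D d n = {x. length x = d \<and> (\<forall>i<d. 1 \<le> x ! i \<and> x ! i \<le> int n)}"

definition bdry :: "nat \<Rightarrow> nat \<Rightarrow> int list set" where
  "bdry d n = {p. length p = d \<and> p \<notin> dom_D d n \<and> (\<exists>q\<in>dom_D d n. l1dist q p = 1)}"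

definition edge :: "nat \<Rightarrow> nat \<Rightarrow> int list \<Rightarrow> int list \<Rightarrow> bool" where
  "edge d n p q \<longleftrightarrow> p \<in> dom_D d n \<union> bdry d n \<and> q \<in> dom_D d n \<union> bdry d n
     \<and> l1dist p q = 1 \<and> \<not> (p \<in> bdry d n \<and> q \<in> bdry d n)"

definition nbrs :: "nat \<Rightarrow> nat \<Rightarrow> int list \<Rightarrow> int list set" where
  "nbrs d n p = {q. edge d n p q}"

definition conductivity :: "nat \<Rightarrow> nat \<Rightarrow> (int list \<Rightarrow> int list \<Rightarrow> real) \<Rightarrow> bool" where
  "conductivity d n \<gamma> \<longleftrightarrow> (\<forall>p q. edge d n p q \<longrightarrow> \<gamma> p q > 0 \<and> \<gamma> p q = \<gamma> q p)"

definition lap :: "nat \<Rightarrow> nat \<Rightarrow> (int list \<Rightarrow> int list \<Rightarrow> real) \<Rightarrow> (int list \<Rightarrow> real)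
    \<Rightarrow> int list \<Rightarrow> real" where
  "lap d n \<gamma> u p = (\<Sum>q\<in>nbrs d n p. \<gamma> p q * (u q - u p))"

definition restr :: "(int list \<Rightarrow> real) \<Rightarrow> int list set \<Rightarrow> int list \<Rightarrow> real" where
  "restr f A = (\<lambda>x. if x \<in> A then f x else 0)"

definition qb :: "nat \<Rightarrow> nat \<Rightarrow> int list \<Rightarrow> int list" where
  "qb d n b = (THE q. q \<in> dom_D d n \<and> l1dist q b = 1)"

definition Sgam :: "nat \<Rightarrow> nat \<Rightarrow> (int list \<Rightarrow> int list \<Rightarrow> real) \<Rightarrow> (int list \<Rightarrow> real)
    \<Rightarrow> int list \<Rightarrow> real" where
  "Sgam d n \<gamma> \<phi> = (THE u. (\<forall>p\<in>dom_D d n. lap d n \<gamma> u p = 0)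
       \<and> (\<forall>b\<in>bdry d n. u b = \<phi> b)
       \<and> (\<forall>x. x \<notin> dom_D d n \<union> bdry d n \<longrightarrow> u x = 0))"

definition Dgam :: "nat \<Rightarrow> nat \<Rightarrow> (int list \<Rightarrow> int list \<Rightarrow> real) \<Rightarrow> (int list \<Rightarrow> real)
    \<Rightarrow> int list \<Rightarrow> real" where
  "Dgam d n \<gamma> u = (\<lambda>b. if b \<in> bdry d n
       then \<gamma> b (qb d n b) * (u (qb d n b) - u b) else 0)"

definition DtN :: "nat \<Rightarrow> nat \<Rightarrow> (int list \<Rightarrow> int list \<Rightarrow> real) \<Rightarrow> (int list \<Rightarrow> real)
    \<Rightarrow> int list \<Rightarrow> real" where
  "DtN d n \<gamma> \<phi> = Dgam d n \<gamma> (Sgam d n \<gamma> \<phi>)"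

definition Lt :: "nat \<Rightarrow> nat \<Rightarrow> int \<Rightarrow> int list set" where
  "Lt d n t = {x \<in> dom_D d n. ssum x = t}"

definition LSt :: "nat \<Rightarrow> nat \<Rightarrow> int \<Rightarrow> int list set" where
  "LSt d n t = {x \<in> dom_D d n. ssum x \<le> t}"

definition Kt :: "nat \<Rightarrow> nat \<Rightarrow> int \<Rightarrow> int list set" where
  "Kt d n t = {x \<in> bdry d n. ssum x = t}"

definition Kplus :: "nat \<Rightarrow> nat \<Rightarrow> int \<Rightarrow> int list set" where
  "Kplus d n t = {x \<in> Kt d n t. Max (set x) = int n + 1}"

definition Kminus :: "nat \<Rightarrow> nat \<Rightarrow> int \<Rightarrow> int list set" where
  "Kminus d n t = {x \<in> Kt d n t. Min (set x) = 0}"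

definition KSplus :: "nat \<Rightarrow> nat \<Rightarrow> int \<Rightarrow> int list set" where
  "KSplus d n t = (\<Union>l\<in>{l. l \<le> t}. Kplus d n l)"

definition KSminus :: "nat \<Rightarrow> nat \<Rightarrow> int \<Rightarrow> int list set" where
  "KSminus d n t = (\<Union>l\<in>{l. l \<le> t}. Kminus d n l)"

definition JSt :: "nat \<Rightarrow> nat \<Rightarrow> int \<Rightarrow> int list set" where
  "JSt d n t = KSminus d n t \<union> KSplus d n (t + 1)"

text \<open>T^(t): phi in R^{J_t} (extended by zero) mapped to the restriction of
  \<Lambda>_\<gamma> phi to \<partial>D \ J_t.\<close>
definition Top :: "nat \<Rightarrow> nat \<Rightarrow> (int list \<Rightarrow> int list \<Rightarrow> real) \<Rightarrow> int
    \<Rightarrow> (int list \<Rightarrow> real) \<Rightarrow> int list \<Rightarrow> real" where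
  "Top d n \<gamma> t \<phi> = restr (DtN d n \<gamma> \<phi>) (bdry d n - JSt d n t)"

definition T1op :: "nat \<Rightarrow> nat \<Rightarrow> (int list \<Rightarrow> int list \<Rightarrow> real) \<Rightarrow> int
    \<Rightarrow> (int list \<Rightarrow> real) \<Rightarrow> int list \<Rightarrow> real" where
  "T1op d n \<gamma> t \<phi> = restr (Sgam d n \<gamma> \<phi>) (Lt d n (t + 1))"

definition upper_ext :: "nat \<Rightarrow> nat \<Rightarrow> (int list \<Rightarrow> int list \<Rightarrow> real) \<Rightarrow> int
    \<Rightarrow> (int list \<Rightarrow> real) \<Rightarrow> int list \<Rightarrow> real" where
  "upper_ext d n \<gamma> t y = (THE w.
       (\<forall>x. x \<notin> (dom_D d n - LSt d n t) \<union> (bdry d n - JSt d n t) \<longrightarrow> w x = 0)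
     \<and> (\<forall>x\<in>Lt d n (t + 1). w x = y x)
     \<and> (\<forall>b\<in>bdry d n - JSt d n t. w b = 0)
     \<and> (\<forall>p\<in>dom_D d n - LSt d n (t + 1). lap d n \<gamma> w p = 0))"

definition T2op :: "nat \<Rightarrow> nat \<Rightarrow> (int list \<Rightarrow> int list \<Rightarrow> real) \<Rightarrow> int
    \<Rightarrow> (int list \<Rightarrow> real) \<Rightarrow> int list \<Rightarrow> real" where
  "T2op d n \<gamma> t y = (let w = upper_ext d n \<gamma> t y in
     (\<lambda>b. if b \<in> bdry d n - JSt d n t
          then \<gamma> b (qb d n b) * (w (qb d n b) - w b) else 0))"

end

theory Submission
  imports Defs "Jordan_Normal_Form.Determinant"
begin

text \<open>Let \<open>u = S\<^sub>\<gamma> \<phi>\<close> and let \<open>w\<close> be the restriction of \<open>u\<close> to the upper part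
  \<open>(D \<setminus> L\<^sub>t\<^sup>S) \<union> (\<partial>D \<setminus> J\<^sub>t\<^sup>S)\<close>. Every neighbour of a point above level \<open>t + 1\<close> lies in the
  upper part, so \<open>w\<close> is harmonic there; it equals \<open>T\<^sub>1 \<phi>\<close> on \<open>L\<^sub>t\<^sub>+\<^sub>1\<close> and vanishes on
  \<open>\<partial>D \<setminus> J\<^sub>t\<^sup>S\<close> because \<open>\<phi>\<close> is supported in \<open>J\<^sub>t\<^sup>S\<close>. By the maximum principle the
  upper Dirichlet problem has at most one solution, so \<open>w\<close> is the extension used by \<open>T\<^sub>2\<close>.
  Finally, the interior neighbour of every \<open>b \<in> \<partial>D \<setminus> J\<^sub>t\<^sup>S\<close> lies in the upper part,
  so the Neumann data of \<open>u\<close> and of \<open>w\<close> agree at \<open>b\<close>.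

  The maximum principle holds in the form: a function harmonic on a subset of \<open>D\<close> and
  vanishing outside it is zero, since a maximum point of minimal coordinate sum would
  have a lower neighbour attaining the maximum. Existence of \<open>S\<^sub>\<gamma>\<close> then follows from
  uniqueness by finite-dimensional linear algebra.\<close>

lemma linear_fun_sum:
  fixes L :: "('a \<Rightarrow> real) \<Rightarrow> 'b \<Rightarrow> real"
  assumes add: "\<And>u v. L (\<lambda>x. u x + v x) = (\<lambda>x. L u x + L v x)"
    and scale: "\<And>c u. L (\<lambda>x. c * u x) = (\<lambda>x. c * L u x)"
    and "finite J"
  shows "L (\<lambda>x. \<Sum>j\<in>J. f j x) = (\<lambda>x. \<Sum>j\<in>J. L (f j) x)"
  using \<open>finite J\<close>
proof (induction J rule: finite_induct)
  case empty
  have "L (\<lambda>x. 0 * (\<lambda>x. 0) x) = (\<lambda>x. 0 * L (\<lambda>x. 0) x)" by (rule scale)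
  then show ?case by simp
next
  case (insert a J)
  have "L (\<lambda>x. \<Sum>j\<in>insert a J. f j x) = L (\<lambda>x. f a x + (\<lambda>x. \<Sum>j\<in>J. f j x) x)"
    using insert by simp
  also have "\<dots> = (\<lambda>x. L (f a) x + L (\<lambda>x. \<Sum>j\<in>J. f j x) x)" by (rule add)
  finally show ?case using insert by simp
qed

lemma solvable_if_injective_on_finite_support:
  fixes L :: "('a \<Rightarrow> real) \<Rightarrow> 'a \<Rightarrow> real"
  assumes "finite A"
    and add: "\<And>u v. L (\<lambda>x. u x + v x) = (\<lambda>x. L u x + L v x)"
    and scale: "\<And>c u. L (\<lambda>x. c * u x) = (\<lambda>x. c * L u x)"
    and inj: "\<And>u. \<forall>x. x \<notin> A \<longrightarrow> u x = 0 \<Longrightarrow> \<forall>x\<in>A. L u x = 0 \<Longrightarrow> u = (\<lambda>_. 0)"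
  shows "\<exists>u. (\<forall>x. x \<notin> A \<longrightarrow> u x = 0) \<and> (\<forall>x\<in>A. L u x = b x)"
proof -
  define N where "N = card A"
  obtain h where h: "bij_betw h {0..<N} A"
    using ex_bij_betw_nat_finite[OF \<open>finite A\<close>] N_def by blast
  have h_inj: "\<And>i j. i < N \<Longrightarrow> j < N \<Longrightarrow> h i = h j \<longleftrightarrow> i = j"
    using h unfolding bij_betw_def inj_on_def by auto
  have h_in: "\<And>i. i < N \<Longrightarrow> h i \<in> A" using h bij_betw_apply by fastforce
  have h_onto: "\<And>x. x \<in> A \<Longrightarrow> \<exists>i<N. x = h i" using h unfolding bij_betw_def by auto
  define \<delta> where "\<delta> j = (\<lambda>x. if x = h j then 1 else (0::real))" for j
  define M where "M = mat N N (\<lambda>(i, j). L (\<delta> j) (h i))"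
  define U where "U v = (\<lambda>x. \<Sum>j<N. v $ j * \<delta> j x)" for v :: "real vec"
  have M: "M \<in> carrier_mat N N" unfolding M_def by simp
  have L_U: "L (U v) (h i) = (M *\<^sub>v v) $ i" if "v \<in> carrier_vec N" "i < N" for v i
  proof -
    have "L (U v) = (\<lambda>x. \<Sum>j<N. L (\<lambda>x. v $ j * \<delta> j x) x)"
      unfolding U_def by (rule linear_fun_sum[OF add scale]) simp
    also have "\<dots> = (\<lambda>x. \<Sum>j<N. v $ j * L (\<delta> j) x)"
      by (simp add: scale)
    finally show ?thesis
      using that unfolding M_def
      by (auto simp: scalar_prod_def lessThan_atLeast0 mult.commute intro!: sum.cong)
  qed
  have U_h: "U v (h j) = v $ j" if "j < N" for v j
  proof -
    have "U v (h j) = (\<Sum>k<N. if k = j then v $ k else 0)"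
      unfolding U_def \<delta>_def using that h_inj by (intro sum.cong) auto
    then show ?thesis using that by simp
  qed
  have U_supp: "\<forall>x. x \<notin> A \<longrightarrow> U v x = 0" for v
    unfolding U_def \<delta>_def using h_in by (auto intro!: sum.neutral)
  have "det M \<noteq> 0"
  proof
    assume "det M = 0"
    then obtain v where v: "v \<in> carrier_vec N" "v \<noteq> 0\<^sub>v N" "M *\<^sub>v v = 0\<^sub>v N"
      using det_0_iff_vec_prod_zero_field[OF M] by blast
    have "\<forall>x\<in>A. L (U v) x = 0"
      using h_onto L_U[OF v(1)] v(3) by fastforce
    then have "U v = (\<lambda>_. 0)" using inj U_supp by blast
    then have "v = 0\<^sub>v N" using U_h v(1) by (intro eq_vecI) (auto, metis)
    then show False using v(2) by simp
  qed
  then have "M \<in> Units (ring_mat TYPE(real) N ())" by (rule det_non_zero_imp_unit[OF M])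
  then obtain B where B: "B \<in> carrier_mat N N" "M * B = 1\<^sub>m N"
    unfolding Units_def ring_mat_def by auto
  define v where "v = B *\<^sub>v vec N (\<lambda>i. b (h i))"
  have v: "v \<in> carrier_vec N" using B unfolding v_def by simp
  have "M *\<^sub>v v = vec N (\<lambda>i. b (h i))"
    unfolding v_def using B M by (metis assoc_mult_mat_vec one_mult_mat_vec vec_carrier)
  then have "\<forall>x\<in>A. L (U v) x = b x"
    using h_onto L_U[OF v] by fastforce
  then show ?thesis using U_supp by blast
qed

lemma l1dist_list_update:
  assumes "i < length p"
  shows "l1dist p (p[i := c]) = \<bar>p!i - c\<bar>"
proof -
  have "l1dist p (p[i := c]) = (\<Sum>j<length p. if j = i then \<bar>p!i - c\<bar> else 0)"
    unfolding l1dist_def by (intro sum.cong) auto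
  then show ?thesis using assms by simp
qed

lemma l1dist_eq_1_imp_list_update:
  assumes "length q = length p" "l1dist p q = 1"
  obtains i where "i < length p" "q = p[i := q!i]" "\<bar>p!i - q!i\<bar> = 1"
proof -
  define f where "f j = \<bar>p!j - q!j\<bar>" for j
  have sum_f: "(\<Sum>j<length p. f j) = 1" using assms unfolding l1dist_def f_def by simp
  have f_nonneg: "\<And>j. f j \<ge> 0" unfolding f_def by simp
  obtain i where i: "i < length p" "f i \<noteq> 0"
    using sum_f by (metis (mono_tags, lifting) lessThan_iff sum.neutral zero_neq_one)
  have "(\<Sum>j<length p. f j) = f i + (\<Sum>j\<in>{..<length p} - {i}. f j)"
    using i by (simp add: sum.remove)
  moreover have "(\<Sum>j\<in>{..<length p} - {i}. f j) \<ge> 0" using f_nonneg by (simp add: sum_nonneg)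
  moreover have "f i \<ge> 1" using i f_nonneg[of i] by linarith
  ultimately have "f i = 1" and "(\<Sum>j\<in>{..<length p} - {i}. f j) = 0" using sum_f by linarith+
  then have "\<forall>j<length p. j \<noteq> i \<longrightarrow> p!j = q!j"
    using f_nonneg by (subst (asm) sum_nonneg_eq_0_iff) (auto simp: f_def)
  then have "q = p[i := q!i]"
    using assms(1) i(1) by (intro nth_equalityI) (auto simp: nth_list_update)
  then show thesis using that i \<open>f i = 1\<close> unfolding f_def by blast
qed

lemma ssum_list_update: "i < length p \<Longrightarrow> ssum (p[i := c]) = ssum p + c - p!i"
  unfolding ssum_def
proof (induction p arbitrary: i)
  case (Cons a p)
  then show ?case by (cases i) auto
qed simp

lemma dom_D_iff: "x \<in> dom_D d n \<longleftrightarrow> length x = d \<and> set x \<subseteq> {1..int n}"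
  unfolding dom_D_def subset_eq all_set_conv_all_nth by auto

lemma finite_dom_D: "finite (dom_D d n)"
proof -
  have "dom_D d n = {xs. set xs \<subseteq> {1..int n} \<and> length xs = d}"
    by (simp add: set_eq_iff dom_D_iff conj_commute)
  then show ?thesis by (simp add: finite_lists_length_eq)
qed

lemma length_bdry: "b \<in> bdry d n \<Longrightarrow> length b = d"
  unfolding bdry_def by simp

lemma bdry_not_dom_D: "b \<in> bdry d n \<Longrightarrow> b \<notin> dom_D d n"
  unfolding bdry_def by simp

lemma set_list_update_dom_D: "q \<in> dom_D d n \<Longrightarrow> set (q[i := c]) \<subseteq> insert c {1..int n}"
  using set_update_subset_insert[of q i c] unfolding dom_D_iff by blast

lemma step_out_of_dom_D:
  assumes q: "q \<in> dom_D d n" and b: "length b = d" "b \<notin> dom_D d n" "l1dist q b = 1"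
  obtains i where "i < d" "b = q[i := b!i]"
    "b!i = 0 \<and> q!i = 1 \<or> b!i = int n + 1 \<and> q!i = int n"
proof -
  have "length q = d" using q unfolding dom_D_iff by simp
  then obtain i where i: "i < d" "b = q[i := b!i]" "\<bar>q!i - b!i\<bar> = 1"
    using l1dist_eq_1_imp_list_update[of b q] b by metis
  have "b!i \<notin> {1..int n}"
  proof
    assume "b!i \<in> {1..int n}"
    then have "set b \<subseteq> {1..int n}"
      using set_list_update_dom_D[OF q, of i "b!i"] i(2) by auto
    then show False using b unfolding dom_D_iff by simp
  qed
  moreover have "q!i \<in> {1..int n}"
    using q i(1) unfolding dom_D_iff by (auto dest: nth_mem)
  ultimately show thesis using that i by auto
qed

lemma bdry_unique_interior_nbr:
  assumes "b \<in> bdry d n"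
  shows "\<exists>!q. q \<in> dom_D d n \<and> l1dist q b = 1"
proof (rule ex_ex1I)
  show "\<exists>q. q \<in> dom_D d n \<and> l1dist q b = 1" using assms unfolding bdry_def by blast
next
  have b: "length b = d" "b \<notin> dom_D d n"
    using assms length_bdry bdry_not_dom_D by blast+
  fix q1 q2
  assume q1: "q1 \<in> dom_D d n \<and> l1dist q1 b = 1" and q2: "q2 \<in> dom_D d n \<and> l1dist q2 b = 1"
  obtain i1 where i1: "i1 < d" "b = q1[i1 := b!i1]"
      "b!i1 = 0 \<and> q1!i1 = 1 \<or> b!i1 = int n + 1 \<and> q1!i1 = int n"
    using step_out_of_dom_D b q1 by metis
  obtain i2 where i2: "i2 < d" "b = q2[i2 := b!i2]"
      "b!i2 = 0 \<and> q2!i2 = 1 \<or> b!i2 = int n + 1 \<and> q2!i2 = int n"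
    using step_out_of_dom_D b q2 by metis
  have "i1 = i2"
  proof (rule ccontr)
    assume "i1 \<noteq> i2"
    then have "b!i2 = q1!i2" using i1(2) by (metis nth_list_update_neq)
    moreover have "q1!i2 \<in> {1..int n}" using q1 i2(1) unfolding dom_D_iff by (auto dest: nth_mem)
    ultimately show False using i2(3) by auto
  qed
  have "q1!j = q2!j" if "j < d" for j
  proof (cases "j = i1")
    case False
    then show ?thesis using i1(2) i2(2) \<open>i1 = i2\<close> by (metis nth_list_update_neq)
  qed (use i1(3) i2(3) \<open>i1 = i2\<close> in auto)
  then show "q1 = q2" using q1 q2 unfolding dom_D_iff by (metis nth_equalityI)
qed

lemma qb_bdry:
  assumes "b \<in> bdry d n"
  shows "qb d n b \<in> dom_D d n" and "l1dist (qb d n b) b = 1"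
  using theI'[OF bdry_unique_interior_nbr[OF assms]] unfolding qb_def by auto

lemma nbrs_dom_D_iff:
  assumes "p \<in> dom_D d n"
  shows "q \<in> nbrs d n p \<longleftrightarrow> length q = d \<and> l1dist p q = 1"
proof
  assume "q \<in> nbrs d n p"
  then show "length q = d \<and> l1dist p q = 1"
    unfolding nbrs_def edge_def using length_bdry dom_D_iff by auto
next
  assume "length q = d \<and> l1dist p q = 1"
  then have "q \<in> dom_D d n \<union> bdry d n" using assms unfolding bdry_def by auto
  then show "q \<in> nbrs d n p"
    using assms \<open>length q = d \<and> l1dist p q = 1\<close> bdry_not_dom_D
    unfolding nbrs_def edge_def by auto
qed

lemma finite_nbrs:
  assumes "p \<in> dom_D d n"
  shows "finite (nbrs d n p)"
proof (rule finite_subset)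
  show "nbrs d n p \<subseteq> {q. set q \<subseteq> {0..int n + 1} \<and> length q = d}"
  proof
    fix q assume "q \<in> nbrs d n p"
    then have q: "length q = d" "l1dist p q = 1" using nbrs_dom_D_iff[OF assms] by auto
    then obtain i where i: "i < d" "q = p[i := q!i]" "\<bar>p!i - q!i\<bar> = 1"
      using l1dist_eq_1_imp_list_update[of q p] assms unfolding dom_D_iff by metis
    have "p!i \<in> {1..int n}" using assms i(1) unfolding dom_D_iff by (auto dest: nth_mem)
    then have "insert (q!i) {1..int n} \<subseteq> {0..int n + 1}" using i(3) by auto
    then show "q \<in> {q. set q \<subseteq> {0..int n + 1} \<and> length q = d}"
      using set_list_update_dom_D[OF assms, of i "q!i"] i(2) q(1) by auto
  qed
qed (rule finite_lists_length_eq, simp)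

lemma decrement_in_nbrs:
  assumes "p \<in> dom_D d n" "i < d"
  shows "p[i := p!i - 1] \<in> nbrs d n p"
  using assms l1dist_list_update[of i p] unfolding nbrs_dom_D_iff[OF assms(1)] dom_D_iff by simp

lemma lap_add: "lap d n \<gamma> (\<lambda>x. u x + v x) = (\<lambda>p. lap d n \<gamma> u p + lap d n \<gamma> v p)"
  unfolding lap_def by (rule ext) (simp add: sum.distrib[symmetric] algebra_simps)

lemma lap_scale: "lap d n \<gamma> (\<lambda>x. c * u x) = (\<lambda>p. c * lap d n \<gamma> u p)"
  unfolding lap_def by (rule ext) (simp add: sum_distrib_left algebra_simps)

lemma lap_diff: "lap d n \<gamma> (\<lambda>x. u x - v x) p = lap d n \<gamma> u p - lap d n \<gamma> v p"
  unfolding lap_def by (simp add: sum_subtractf[symmetric] algebra_simps)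

lemma lap_uminus: "lap d n \<gamma> (\<lambda>x. - u x) p = - lap d n \<gamma> u p"
  unfolding lap_def by (simp add: sum_negf[symmetric] algebra_simps)

lemma lap_eq_0_at_local_max:
  assumes "conductivity d n \<gamma>" "p \<in> dom_D d n" "lap d n \<gamma> v p = 0"
    and max: "\<forall>r\<in>nbrs d n p. v r \<le> v p" and q: "q \<in> nbrs d n p"
  shows "v q = v p"
proof -
  have \<gamma>_pos: "\<gamma> p r > 0" if "r \<in> nbrs d n p" for r
    using assms(1) that unfolding conductivity_def nbrs_def by auto
  have nonneg: "0 \<le> \<gamma> p r * (v p - v r)" if "r \<in> nbrs d n p" for r
    using \<gamma>_pos[OF that] max that by (simp add: less_imp_le)
  have "(\<Sum>r\<in>nbrs d n p. \<gamma> p r * (v p - v r)) = - lap d n \<gamma> v p"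
    unfolding lap_def by (simp add: sum_negf[symmetric] algebra_simps)
  then have "(\<Sum>r\<in>nbrs d n p. \<gamma> p r * (v p - v r)) = 0" using assms(3) by simp
  then have "\<gamma> p q * (v p - v q) = 0"
    using sum_nonneg_eq_0_iff[OF finite_nbrs[OF assms(2)] nonneg] q by simp
  then show ?thesis using \<gamma>_pos[OF q] by simp
qed

lemma maximum_principle:
  assumes "d \<ge> 1" "conductivity d n \<gamma>" "U \<subseteq> dom_D d n"
    and outside: "\<forall>x. x \<notin> U \<longrightarrow> v x = 0" and harmonic: "\<forall>p\<in>U. lap d n \<gamma> v p = 0"
  shows "v x \<le> 0"
proof (rule ccontr)
  assume "\<not> v x \<le> 0"
  then have x: "x \<in> U" "v x > 0" using outside by force+
  have "finite U" using assms(3) finite_dom_D finite_subset by blast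
  define M where "M = Max (v ` U)"
  have "v x \<le> M" unfolding M_def using \<open>finite U\<close> x(1) by simp
  then have le_M: "v y \<le> M" for y
    unfolding M_def using \<open>finite U\<close> outside x(2) by (cases "y \<in> U") auto
  have "M > 0" using \<open>v x \<le> M\<close> x(2) by simp
  define S where "S = {p \<in> U. v p = M}"
  have "M \<in> v ` U" unfolding M_def using \<open>finite U\<close> x(1) by (intro Max_in) auto
  then have "finite S" "S \<noteq> {}" using \<open>finite U\<close> unfolding S_def by auto
  then obtain p where p: "p \<in> S" and min: "\<forall>q\<in>S. \<not> ssum q < ssum p"
    using arg_min_if_finite[of S ssum] by blast
  then have pD: "p \<in> dom_D d n" using assms(3) unfolding S_def by blast
  let ?q = "p[0 := p!0 - 1]"
  have q: "?q \<in> nbrs d n p" using decrement_in_nbrs[OF pD] assms(1) by simp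
  have "v ?q = v p"
    using lap_eq_0_at_local_max[OF assms(2) pD _ _ q] harmonic p le_M unfolding S_def by auto
  then have "?q \<in> S" using outside \<open>M > 0\<close> p unfolding S_def by force
  moreover have "ssum ?q < ssum p"
    using ssum_list_update[of 0 p] pD assms(1) unfolding dom_D_iff by simp
  ultimately show False using min by blast
qed

lemma harmonic_vanishing_outside_eq_0:
  assumes "d \<ge> 1" "conductivity d n \<gamma>" "U \<subseteq> dom_D d n"
    and "\<forall>x. x \<notin> U \<longrightarrow> v x = 0" and "\<forall>p\<in>U. lap d n \<gamma> v p = 0"
  shows "v = (\<lambda>_. 0)"
proof
  fix x
  have "v x \<le> 0" using maximum_principle[OF assms] .
  moreover have "- v x \<le> 0"
    using maximum_principle[OF assms(1-3), of "\<lambda>x. - v x"] assms(4,5) by (simp add: lap_uminus)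
  ultimately show "v x = 0" by simp
qed

definition dirichlet_solution :: "nat \<Rightarrow> nat \<Rightarrow> (int list \<Rightarrow> int list \<Rightarrow> real)
    \<Rightarrow> (int list \<Rightarrow> real) \<Rightarrow> (int list \<Rightarrow> real) \<Rightarrow> bool" where
  "dirichlet_solution d n \<gamma> \<phi> u \<longleftrightarrow> (\<forall>p\<in>dom_D d n. lap d n \<gamma> u p = 0)
       \<and> (\<forall>b\<in>bdry d n. u b = \<phi> b)
       \<and> (\<forall>x. x \<notin> dom_D d n \<union> bdry d n \<longrightarrow> u x = 0)"

lemma dirichlet_solution_unique:
  assumes "d \<ge> 1" "conductivity d n \<gamma>"
    and "dirichlet_solution d n \<gamma> \<phi> u" "dirichlet_solution d n \<gamma> \<phi> u'"
  shows "u = u'"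
proof -
  have "(\<lambda>x. u x - u' x) = (\<lambda>_. 0)"
  proof (rule harmonic_vanishing_outside_eq_0[OF assms(1,2) order_refl])
    show "\<forall>x. x \<notin> dom_D d n \<longrightarrow> u x - u' x = 0"
      using assms(3,4) unfolding dirichlet_solution_def by (metis Un_iff diff_self)
    show "\<forall>p\<in>dom_D d n. lap d n \<gamma> (\<lambda>x. u x - u' x) p = 0"
      using assms(3,4) unfolding dirichlet_solution_def by (simp add: lap_diff)
  qed
  then show ?thesis by (simp add: fun_eq_iff)
qed

lemma dirichlet_solution_exists:
  assumes "d \<ge> 1" "conductivity d n \<gamma>"
  shows "\<exists>u. dirichlet_solution d n \<gamma> \<phi> u"
proof -
  define \<phi>\<^sub>b where "\<phi>\<^sub>b = restr \<phi> (bdry d n)"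
  have "\<exists>v. (\<forall>x. x \<notin> dom_D d n \<longrightarrow> v x = 0)
      \<and> (\<forall>x\<in>dom_D d n. lap d n \<gamma> v x = - lap d n \<gamma> \<phi>\<^sub>b x)"
    by (rule solvable_if_injective_on_finite_support[OF finite_dom_D lap_add lap_scale])
       (rule harmonic_vanishing_outside_eq_0[OF assms order_refl])
  then obtain v where v: "\<forall>x. x \<notin> dom_D d n \<longrightarrow> v x = 0"
    "\<forall>x\<in>dom_D d n. lap d n \<gamma> v x = - lap d n \<gamma> \<phi>\<^sub>b x"
    by (elim exE conjE)
  have "dirichlet_solution d n \<gamma> \<phi> (\<lambda>x. v x + \<phi>\<^sub>b x)"
    using v bdry_not_dom_D unfolding dirichlet_solution_def \<phi>\<^sub>b_def restr_def
    by (auto simp: lap_add)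
  then show ?thesis by blast
qed

lemma dirichlet_solution_Sgam:
  assumes "d \<ge> 1" "conductivity d n \<gamma>"
  shows "dirichlet_solution d n \<gamma> \<phi> (Sgam d n \<gamma> \<phi>)"
proof -
  have "\<exists>!u. dirichlet_solution d n \<gamma> \<phi> u"
    using dirichlet_solution_exists[OF assms] dirichlet_solution_unique[OF assms] by blast
  then show ?thesis unfolding Sgam_def dirichlet_solution_def[symmetric] by (rule theI')
qed

lemma KSminus_iff: "x \<in> KSminus d n t \<longleftrightarrow> x \<in> bdry d n \<and> ssum x \<le> t \<and> Min (set x) = 0"
  unfolding KSminus_def Kminus_def Kt_def by auto

lemma KSplus_iff: "x \<in> KSplus d n t \<longleftrightarrow> x \<in> bdry d n \<and> ssum x \<le> t \<and> Max (set x) = int n + 1"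
  unfolding KSplus_def Kplus_def Kt_def by auto

definition upper_part :: "nat \<Rightarrow> nat \<Rightarrow> int \<Rightarrow> int list set" where
  "upper_part d n t = (dom_D d n - LSt d n t) \<union> (bdry d n - JSt d n t)"

lemma nbrs_subset_upper_part:
  assumes p: "p \<in> dom_D d n - LSt d n (t + 1)"
  shows "nbrs d n p \<subseteq> upper_part d n t"
proof
  fix q assume "q \<in> nbrs d n p"
  have pD: "p \<in> dom_D d n" and "ssum p \<ge> t + 2" using p unfolding LSt_def by auto
  have q: "length q = d" "l1dist p q = 1" using nbrs_dom_D_iff[OF pD] \<open>q \<in> nbrs d n p\<close> by auto
  show "q \<in> upper_part d n t"
  proof (cases "q \<in> dom_D d n")
    case True
    obtain i where "i < length p" "q = p[i := q!i]" "\<bar>p!i - q!i\<bar> = 1"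
      using l1dist_eq_1_imp_list_update[of q p] q pD unfolding dom_D_iff by metis
    then have "ssum q > t"
      using ssum_list_update[of i p "q!i"] \<open>ssum p \<ge> t + 2\<close> by auto
    then show ?thesis using True unfolding upper_part_def LSt_def by auto
  next
    case False
    then obtain i where i: "i < d" "q = p[i := q!i]"
        "q!i = 0 \<and> p!i = 1 \<or> q!i = int n + 1 \<and> p!i = int n"
      using step_out_of_dom_D[OF pD q(1) False q(2)] by metis
    have "ssum q = ssum p + q!i - p!i"
      using ssum_list_update[of i p "q!i"] i pD unfolding dom_D_iff by (metis)
    then have "q \<notin> KSminus d n t" using \<open>ssum p \<ge> t + 2\<close> i(3) unfolding KSminus_iff by auto
    moreover have "q \<notin> KSplus d n (t + 1)"
    proof
      assume "q \<in> KSplus d n (t + 1)"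
      then have "ssum q \<le> t + 1" and max: "Max (set q) = int n + 1" unfolding KSplus_iff by auto
      then have "set q \<subseteq> insert 0 {1..int n}"
        using \<open>ssum q = ssum p + q!i - p!i\<close> \<open>ssum p \<ge> t + 2\<close> i(2,3)
          set_list_update_dom_D[OF pD, of i "q!i"] by auto
      moreover have "Max (set q) \<in> set q" using i(1) q(1) by (intro Max_in) auto
      ultimately show False using max by auto
    qed
    ultimately show ?thesis
      using False q p unfolding upper_part_def JSt_def bdry_def by auto
  qed
qed

lemma qb_in_upper_part:
  assumes b: "b \<in> bdry d n - JSt d n t"
  shows "qb d n b \<in> dom_D d n - LSt d n t"
proof -
  let ?q = "qb d n b"
  have q: "?q \<in> dom_D d n" "l1dist ?q b = 1" using qb_bdry b by auto
  have "length b = d" "b \<notin> dom_D d n" using b length_bdry bdry_not_dom_D by auto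
  then obtain i where i: "i < d" "b = ?q[i := b!i]"
      "b!i = 0 \<and> ?q!i = 1 \<or> b!i = int n + 1 \<and> ?q!i = int n"
    by (rule step_out_of_dom_D[OF q(1) _ _ q(2)])
  have sb: "ssum b = ssum ?q + b!i - ?q!i"
    using ssum_list_update[of i ?q "b!i"] i q(1) unfolding dom_D_iff by metis
  have set_b: "set b \<subseteq> insert (b!i) {1..int n}" "b!i \<in> set b"
    using set_list_update_dom_D[OF q(1), of i "b!i"] i q(1) set_update_memI[of i ?q "b!i"]
    unfolding dom_D_iff by auto
  have "\<not> ssum ?q \<le> t"
  proof
    assume "ssum ?q \<le> t"
    show False
      using i(3)
    proof
      assume "b!i = 0 \<and> ?q!i = 1"
      then have "Min (set b) = 0" using set_b by (intro Min_eqI) auto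
      then have "b \<in> KSminus d n t"
        using b sb \<open>ssum ?q \<le> t\<close> \<open>b!i = 0 \<and> ?q!i = 1\<close> unfolding KSminus_iff by auto
      then show False using b unfolding JSt_def by simp
    next
      assume "b!i = int n + 1 \<and> ?q!i = int n"
      then have "Max (set b) = int n + 1" using set_b by (intro Max_eqI) auto
      then have "b \<in> KSplus d n (t + 1)"
        using b sb \<open>ssum ?q \<le> t\<close> \<open>b!i = int n + 1 \<and> ?q!i = int n\<close> unfolding KSplus_iff by auto
      then show False using b unfolding JSt_def by simp
    qed
  qed
  then show ?thesis using q(1) unfolding LSt_def by simp
qed

definition upper_solution :: "nat \<Rightarrow> nat \<Rightarrow> (int list \<Rightarrow> int list \<Rightarrow> real) \<Rightarrow> int
    \<Rightarrow> (int list \<Rightarrow> real) \<Rightarrow> (int list \<Rightarrow> real) \<Rightarrow> bool" where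
  "upper_solution d n \<gamma> t y w \<longleftrightarrow>
       (\<forall>x. x \<notin> upper_part d n t \<longrightarrow> w x = 0)
     \<and> (\<forall>x\<in>Lt d n (t + 1). w x = y x)
     \<and> (\<forall>b\<in>bdry d n - JSt d n t. w b = 0)
     \<and> (\<forall>p\<in>dom_D d n - LSt d n (t + 1). lap d n \<gamma> w p = 0)"

lemma upper_solution_unique:
  assumes "d \<ge> 1" "conductivity d n \<gamma>"
    and w: "upper_solution d n \<gamma> t y w" and w': "upper_solution d n \<gamma> t y w'"
  shows "w = w'"
proof -
  have "(\<lambda>x. w x - w' x) = (\<lambda>_. 0)"
  proof (rule harmonic_vanishing_outside_eq_0[OF assms(1,2), of "dom_D d n - LSt d n (t + 1)"])
    show "\<forall>x. x \<notin> dom_D d n - LSt d n (t + 1) \<longrightarrow> w x - w' x = 0"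
    proof (intro allI impI)
      fix x assume "x \<notin> dom_D d n - LSt d n (t + 1)"
      then have "x \<in> Lt d n (t + 1) \<or> x \<notin> upper_part d n t \<or> x \<in> bdry d n - JSt d n t"
        unfolding upper_part_def Lt_def LSt_def by auto
      then show "w x - w' x = 0" using w w' unfolding upper_solution_def by auto
    qed
    show "\<forall>p\<in>dom_D d n - LSt d n (t + 1). lap d n \<gamma> (\<lambda>x. w x - w' x) p = 0"
      using w w' unfolding upper_solution_def by (simp add: lap_diff)
  qed auto
  then show ?thesis by (simp add: fun_eq_iff)
qed

lemma upper_ext_eqI:
  assumes "d \<ge> 1" "conductivity d n \<gamma>" "upper_solution d n \<gamma> t y w"
  shows "upper_ext d n \<gamma> t y = w"
  using the_equality[of "upper_solution d n \<gamma> t y" w] upper_solution_unique[OF assms(1,2) _ assms(3)]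
    assms(3)
  unfolding upper_ext_def upper_solution_def upper_part_def by blast

lemma upper_solution_restr_Sgam:
  assumes "d \<ge> 1" "conductivity d n \<gamma>" and \<phi>: "\<forall>x. x \<notin> JSt d n t \<longrightarrow> \<phi> x = 0"
  shows "upper_solution d n \<gamma> t (T1op d n \<gamma> t \<phi>) (restr (Sgam d n \<gamma> \<phi>) (upper_part d n t))"
proof -
  let ?u = "Sgam d n \<gamma> \<phi>" and ?R = "upper_part d n t"
  have u: "dirichlet_solution d n \<gamma> \<phi> ?u" by (rule dirichlet_solution_Sgam[OF assms(1,2)])
  have "lap d n \<gamma> (restr ?u ?R) p = 0" if p: "p \<in> dom_D d n - LSt d n (t + 1)" for p
  proof -
    have "p \<in> ?R" using p unfolding upper_part_def LSt_def by auto
    then have "lap d n \<gamma> (restr ?u ?R) p = lap d n \<gamma> ?u p"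
      using nbrs_subset_upper_part[OF p] unfolding lap_def restr_def by (intro sum.cong) auto
    then show ?thesis using u p unfolding dirichlet_solution_def by simp
  qed
  moreover have "Lt d n (t + 1) \<subseteq> ?R" unfolding upper_part_def Lt_def LSt_def by auto
  ultimately show ?thesis
    using u \<phi> unfolding upper_solution_def T1op_def restr_def dirichlet_solution_def
    by (auto simp: upper_part_def)
qed

theorem proposition2p1:
  fixes d n :: nat and t :: int and \<gamma> :: "int list \<Rightarrow> int list \<Rightarrow> real"
  assumes "d \<ge> 2" and "n \<ge> 1"
    and "conductivity d n \<gamma>"
    and "int d - 1 \<le> t" and "t \<le> int d * int n - 1"
  shows "\<forall>\<phi>. (\<forall>x. x \<notin> JSt d n t \<longrightarrow> \<phi> x = 0) \<longrightarrow>
           Top d n \<gamma> t \<phi> = T2op d n \<gamma> t (T1op d n \<gamma> t \<phi>)"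
proof (intro allI impI ext)
  fix \<phi> :: "int list \<Rightarrow> real" and b :: "int list"
  assume \<phi>: "\<forall>x. x \<notin> JSt d n t \<longrightarrow> \<phi> x = 0"
  have "d \<ge> 1" using assms(1) by simp
  define u where "u = Sgam d n \<gamma> \<phi>"
  have w: "upper_ext d n \<gamma> t (T1op d n \<gamma> t \<phi>) = restr u (upper_part d n t)"
    unfolding u_def
    by (rule upper_ext_eqI[OF \<open>d \<ge> 1\<close> assms(3) upper_solution_restr_Sgam[OF \<open>d \<ge> 1\<close> assms(3) \<phi>]])
  show "Top d n \<gamma> t \<phi> b = T2op d n \<gamma> t (T1op d n \<gamma> t \<phi>) b"
  proof (cases "b \<in> bdry d n - JSt d n t")
    case True
    then have "qb d n b \<in> upper_part d n t" "b \<in> upper_part d n t"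
      using qb_in_upper_part[OF True] unfolding upper_part_def by auto
    then show ?thesis
      using True unfolding Top_def T2op_def DtN_def Dgam_def w restr_def u_def by simp
  qed (auto simp: Top_def T2op_def restr_def Let_def)
qed

end
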